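(* Let $G$ be a group which is an internal semidirect product $G = HK$, where $H$ is a normal subgroup of $G$, $K$ is a subgroup of $G$ with $H\cap K=1$. Let $\hat{\mathcal{M}}_K$ be the set of all formal matrices $\begin{pmatrix}\alpha & 0\\ \gamma & \delta\end{pmatrix}$ with $\alpha\in \mathrm{Map}(H,H)$, $\gamma\in \mathrm{Hom}(H,K)$, $\delta\in \mathrm{Aut}(K)$ satisfying: (C1) $\alpha(hh') = \alpha(h)\,\alpha(h')^{\gamma(h)}$ for all $h,h'\in H$; (C2) $\gamma(h^{k}) = \gamma(h)^{\delta(k)}$ for all $h\in H$, $k\in K$; (C3) $\alpha(h^{k}) = \alpha(h)^{\delta(k)}$ for all $h\in H$, $k\in K$; (C4) for every $h'k'\in G$ ($h'\in H$, $k'\in K$) there is a unique $hk\in G$ ($h\in H,k\in K$) with $\alpha(h)=h'$ and $\gamma(h)\delta(k)=k'$. Equip $\hat{\mathcal{M}}_K$ with the multiplication $\begin{pmatrix}\alpha & 0\\ \gamma & \delta\end{pmatrix}\begin{pmatrix}\alpha' & 0\\ \gamma' & \delta'\end{pmatrix}=\begin{pmatrix}\alpha\alpha' & 0\\ \gamma\alpha'+\delta\gamma' & \delta\delta'\end{pmatrix}$, where $\alpha\alpha'$, $\delta\delta'$ are compositions and $(\gamma\alpha'+\delta\gamma')(h)=\gamma(\alpha'(h))\,\delta(\gamma'(h))$. Then $\hat{\mathcal{M}}_K$ is a group and the group $\mathrm{Aut}_K(G)$ is isomorphic to $\hat{\mathcal{M}}_K$ (via $\theta\mapsto \begin{pmatrix}\alpha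 & 0\\ \gamma & \delta\end{pmatrix}$ where $\theta(h)=\alpha(h)\gamma(h)$ for $h\in H$ and $\delta=\theta|_K$).
   Context: For a group $G$ and $x,y\in G$, $x^{y}$ denotes the conjugate $yxy^{-1}$. For a subgroup $K$ of $G$, $\mathrm{Aut}_K(G)=\{\theta\in\mathrm{Aut}(G)\mid \theta(K)=K\}$. $\mathrm{Map}(H,H)$ denotes the set of all maps $H\to H$. *)

theory Defs
  imports "HOL-Algebra.Algebra"
begin

(* conjugation x^y = y x y^{-1} *)
definition conjg :: "('a, 'b) monoid_scheme \<Rightarrow> 'a \<Rightarrow> 'a \<Rightarrow> 'a"
  where "conjg G x y = y \<otimes>\<^bsub>G\<^esub> x \<otimes>\<^bsub>G\<^esub> inv\<^bsub>G\<^esub> y"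

type_synonym 'a fmat = "('a \<Rightarrow> 'a) \<times> ('a \<Rightarrow> 'a) \<times> ('a \<Rightarrow> 'a)"

(* Formal matrices (alpha, gamma, delta), maps represented extensionally on H resp. K *)
definition MK :: "('a, 'b) monoid_scheme \<Rightarrow> 'a set \<Rightarrow> 'a set \<Rightarrow> 'a fmat set" where
  "MK G H K = {(\<alpha>, \<gamma>, \<delta>).
     \<alpha> \<in> H \<rightarrow>\<^sub>E H \<and>
     \<gamma> \<in> hom (G\<lparr>carrier := H\<rparr>) (G\<lparr>carrier := K\<rparr>) \<and> \<gamma> \<in> extensional H \<and>
     \<delta> \<in> auto (G\<lparr>carrier := K\<rparr>) \<and>
     (\<forall>h\<in>H. \<forall>h'\<in>H. \<alpha> (h \<otimes>\<^bsub>G\<^esub> h') = \<alpha> h \<otimes>\<^bsub>G\<^esub> conjg G (\<alpha> h') (\<gamma> h)) \<and>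
     (\<forall>h\<in>H. \<forall>k\<in>K. \<gamma> (conjg G h k) = conjg G (\<gamma> h) (\<delta> k)) \<and>
     (\<forall>h\<in>H. \<forall>k\<in>K. \<alpha> (conjg G h k) = conjg G (\<alpha> h) (\<delta> k)) \<and>
     (\<forall>h'\<in>H. \<forall>k'\<in>K. \<exists>!p. p \<in> H \<times> K \<and> \<alpha> (fst p) = h' \<and>
                                  \<gamma> (fst p) \<otimes>\<^bsub>G\<^esub> \<delta> (snd p) = k')}"

definition MK_mult :: "('a, 'b) monoid_scheme \<Rightarrow> 'a set \<Rightarrow> 'a set \<Rightarrow> 'a fmat \<Rightarrow> 'a fmat \<Rightarrow> 'a fmat" where
  "MK_mult G H K P Q =
     (compose H (fst P) (fst Q),
      (\<lambda>h\<in>H. monoid.mult G (fst (snd P) (fst Q h)) (snd (snd P) (fst (snd Q) h))),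
      compose K (snd (snd P)) (snd (snd Q)))"

definition MK_one :: "('a, 'b) monoid_scheme \<Rightarrow> 'a set \<Rightarrow> 'a set \<Rightarrow> 'a fmat" where
  "MK_one G H K = ((\<lambda>h\<in>H. h), (\<lambda>h\<in>H. \<one>\<^bsub>G\<^esub>), (\<lambda>k\<in>K. k))"

definition MK_group :: "('a, 'b) monoid_scheme \<Rightarrow> 'a set \<Rightarrow> 'a set \<Rightarrow> 'a fmat monoid" where
  "MK_group G H K = \<lparr>carrier = MK G H K, monoid.mult = MK_mult G H K, one = MK_one G H K\<rparr>"

definition AutK_group :: "('a, 'b) monoid_scheme \<Rightarrow> 'a set \<Rightarrow> ('a \<Rightarrow> 'a) monoid" where
  "AutK_group G K = (AutoGroup G)\<lparr>carrier := {\<theta> \<in> auto G. \<theta> ` K = K}\<rparr>"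

end

theory Submission
  imports Defs
begin

text \<open>
  Every element of \<open>G\<close> factors uniquely as \<open>hk\<close> with \<open>h \<in> H\<close>, \<open>k \<in> K\<close>.
  For \<open>\<theta> \<in> Aut\<^sub>K(G)\<close>, factoring \<open>\<theta>(h) = \<alpha>(h)\<gamma>(h)\<close> in this way defines the
  matrix of \<open>\<theta>\<close>, and \<open>\<theta>(hk) = \<alpha>(h)\<cdot>(\<gamma>(h)\<theta>(k))\<close> is again such a factorisation.
  Uniqueness of factorisations therefore turns \<open>\<theta>(hh') = \<theta>(h)\<theta>(h')\<close> and
  \<open>\<theta>(h\<^sup>k) = \<theta>(h)\<^bsup>\<theta>(k)\<^esup>\<close> into (C1)--(C3), bijectivity of \<open>\<theta>\<close> into (C4), and
  composition of automorphisms into the matrix product. Conversely, (C1)--(C3) make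
  \<open>hk \<mapsto> \<alpha>(h)\<gamma>(h)\<delta>(k)\<close> a homomorphism and (C4) makes it bijective, so
  \<open>\<theta> \<mapsto> (\<alpha>, \<gamma>, \<delta>)\<close> is a bijective homomorphism out of the group \<open>Aut\<^sub>K(G)\<close>;
  this makes the matrices a group and the map an isomorphism.
\<close>

lemma (in group) inv_mult_cancel_left:
  "x \<in> carrier G \<Longrightarrow> y \<in> carrier G \<Longrightarrow> inv x \<otimes> (x \<otimes> y) = y"
  by (simp add: m_assoc[symmetric])

lemma (in group) conjg_one_right [simp]: "x \<in> carrier G \<Longrightarrow> conjg G x \<one> = x"
  by (simp add: conjg_def)

lemma (in group) conjg_mult_distrib:
  "x \<in> carrier G \<Longrightarrow> y \<in> carrier G \<Longrightarrow> z \<in> carrier G \<Longrightarrow>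
   conjg G (x \<otimes> y) z = conjg G x z \<otimes> conjg G y z"
  by (simp add: conjg_def m_assoc inv_mult_cancel_left)

lemma (in group) mult_commute_conjg:
  "a \<in> carrier G \<Longrightarrow> b \<in> carrier G \<Longrightarrow> c \<in> carrier G \<Longrightarrow> d \<in> carrier G \<Longrightarrow>
   a \<otimes> b \<otimes> (c \<otimes> d) = a \<otimes> conjg G c b \<otimes> (b \<otimes> d)"
  by (simp add: conjg_def m_assoc inv_mult_cancel_left)

lemma bij_betw_iff_ex1:
  assumes "f \<in> A \<rightarrow> B"
  shows "bij_betw f A B \<longleftrightarrow> (\<forall>b\<in>B. \<exists>!a. a \<in> A \<and> f a = b)"
proof
  assume "bij_betw f A B"
  then show "\<forall>b\<in>B. \<exists>!a. a \<in> A \<and> f a = b"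
    unfolding bij_betw_def inj_on_def by blast
next
  assume ex1: "\<forall>b\<in>B. \<exists>!a. a \<in> A \<and> f a = b"
  have "inj_on f A"
  proof (rule inj_onI)
    fix a a' assume "a \<in> A" "a' \<in> A" "f a = f a'"
    then show "a = a'" using ex1 assms by (metis Pi_mem)
  qed
  moreover have "f ` A = B"
    using ex1 assms by blast
  ultimately show "bij_betw f A B"
    by (simp add: bij_betw_def)
qed

lemma (in group) surj_hom_imp_group:
  assumes "f \<in> hom G M" "f ` carrier G = carrier M" "f \<one> = \<one>\<^bsub>M\<^esub>"
  shows "group M"
  using hom_imp_img_group[OF assms(1)] assms(2,3) by simp

lemma (in group) stabilizer_subgroup_AutoGroup:
  assumes "S \<subseteq> carrier G"
  shows "subgroup {\<theta> \<in> auto G. \<theta> ` S = S} (AutoGroup G)"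
proof -
  interpret Aut: group "AutoGroup G" by (rule AutoGroup)
  have carrier_Aut: "carrier (AutoGroup G) = auto G"
    by (simp add: AutoGroup_def)
  show ?thesis
  proof (rule Aut.subgroupI)
    have "(\<lambda>x\<in>carrier G. x) ` S = S" using assms by auto
    then show "{\<theta> \<in> auto G. \<theta> ` S = S} \<noteq> {}" using id_in_auto by blast
  next
    fix \<theta> assume \<theta>: "\<theta> \<in> {\<theta> \<in> auto G. \<theta> ` S = S}"
    then have bij: "\<theta> \<in> Bij (carrier G)" by (simp add: auto_def)
    have "inv\<^bsub>AutoGroup G\<^esub> \<theta> = inv\<^bsub>BijGroup (carrier G)\<^esub> \<theta>"
      using \<theta> group.m_inv_consistent[OF group_BijGroup subgroup_auto]
      by (simp add: AutoGroup_def)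
    also have "\<dots> = restrict (inv_into (carrier G) \<theta>) (carrier G)"
      using bij by (simp add: inv_BijGroup)
    finally have "(inv\<^bsub>AutoGroup G\<^esub> \<theta>) ` S = inv_into (carrier G) \<theta> ` \<theta> ` S"
      using \<theta> assms by auto
    also have "\<dots> = S"
      using bij assms by (simp add: Bij_def bij_betw_def inv_into_image_cancel)
    finally show "inv\<^bsub>AutoGroup G\<^esub> \<theta> \<in> {\<theta> \<in> auto G. \<theta> ` S = S}"
      using \<theta> Aut.inv_closed carrier_Aut by auto
  next
    fix \<theta> \<theta>' assume \<theta>: "\<theta> \<in> {\<theta> \<in> auto G. \<theta> ` S = S}"
      and \<theta>': "\<theta>' \<in> {\<theta> \<in> auto G. \<theta> ` S = S}"
    then have "\<theta> \<otimes>\<^bsub>AutoGroup G\<^esub> \<theta>' = compose (carrier G) \<theta> \<theta>'"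
      by (simp add: AutoGroup_def BijGroup_def auto_def)
    moreover have "compose (carrier G) \<theta> \<theta>' ` S = \<theta> ` \<theta>' ` S"
      using assms by (force simp: compose_def)
    moreover have "\<theta> \<otimes>\<^bsub>AutoGroup G\<^esub> \<theta>' \<in> auto G"
      using \<theta> \<theta>' Aut.m_closed[of \<theta> \<theta>'] carrier_Aut by simp
    ultimately show "\<theta> \<otimes>\<^bsub>AutoGroup G\<^esub> \<theta>' \<in> {\<theta> \<in> auto G. \<theta> ` S = S}"
      using \<theta> \<theta>' by simp
  qed (simp add: AutoGroup_def)
qed

lemma AutK_group_is_group:
  assumes "group G" "subgroup K G"
  shows "group (AutK_group G K)"
  unfolding AutK_group_def
  by (rule subgroup.subgroup_is_group[OF group.stabilizer_subgroup_AutoGroup group.AutoGroup])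
     (use assms subgroup.subset in auto)

locale internal_semidirect_product = group G for G (structure) +
  fixes H K :: "'a set"
  assumes normal_H: "H \<lhd> G"
    and subgroup_K: "subgroup K G"
    and H_inter_K: "H \<inter> K = {\<one>}"
    and H_set_mult_K: "H <#> K = carrier G"
begin

lemma subgroup_H: "subgroup H G"
  using normal_H by (rule normal_imp_subgroup)

lemma H_carrier [simp]: "h \<in> H \<Longrightarrow> h \<in> carrier G"
  using subgroup_H by (rule subgroup.mem_carrier)

lemma K_carrier [simp]: "k \<in> K \<Longrightarrow> k \<in> carrier G"
  using subgroup_K by (rule subgroup.mem_carrier)

lemma H_mult_closed [simp]: "a \<in> H \<Longrightarrow> b \<in> H \<Longrightarrow> a \<otimes> b \<in> H"
  using subgroup_H by (rule subgroup.m_closed)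

lemma K_mult_closed [simp]: "a \<in> K \<Longrightarrow> b \<in> K \<Longrightarrow> a \<otimes> b \<in> K"
  using subgroup_K by (rule subgroup.m_closed)

lemma H_one [simp]: "\<one> \<in> H"
  using subgroup_H by (rule subgroup.one_closed)

lemma K_one [simp]: "\<one> \<in> K"
  using subgroup_K by (rule subgroup.one_closed)

lemma H_conjg_closed [simp]: "h \<in> H \<Longrightarrow> g \<in> carrier G \<Longrightarrow> conjg G h g \<in> H"
  unfolding conjg_def using normal_H by (rule normal.inv_op_closed2)

lemma K_conjg_closed [simp]: "k \<in> K \<Longrightarrow> k' \<in> K \<Longrightarrow> conjg G k k' \<in> K"
  unfolding conjg_def using subgroup_K by (simp add: subgroup.m_inv_closed)

lemma HK_decomposition_unique:
  assumes "h \<in> H" "k \<in> K" "h' \<in> H" "k' \<in> K" and eq: "h \<otimes> k = h' \<otimes> k'"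
  shows "h = h' \<and> k = k'"
proof -
  have "h = h' \<otimes> k' \<otimes> inv k"
    using assms by (simp add: eq[symmetric] m_assoc)
  then have "inv h' \<otimes> h = k' \<otimes> inv k"
    using assms by (simp add: m_assoc[symmetric])
  moreover have "inv h' \<otimes> h \<in> H" "k' \<otimes> inv k \<in> K"
    using assms subgroup_H subgroup_K by (simp_all add: subgroup.m_inv_closed)
  ultimately have "inv h' \<otimes> h = \<one>" "k' \<otimes> inv k = \<one>"
    using H_inter_K by auto
  then show ?thesis
    using assms by (simp add: inv_solve_left' inv_solve_right')
qed

definition proj_H :: "'a \<Rightarrow> 'a"
  where "proj_H g = (THE h. h \<in> H \<and> (\<exists>k\<in>K. g = h \<otimes> k))"

definition proj_K :: "'a \<Rightarrow> 'a"
  where "proj_K g = inv (proj_H g) \<otimes> g"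

lemma proj_HK_eq:
  assumes "h \<in> H" "k \<in> K" "g = h \<otimes> k"
  shows "proj_H g = h" "proj_K g = k"
proof -
  show "proj_H g = h"
    unfolding proj_H_def
    using assms HK_decomposition_unique by (intro the_equality) blast+
  then show "proj_K g = k"
    using assms by (simp add: proj_K_def m_assoc[symmetric])
qed

lemma proj_HK_decomposition:
  assumes "g \<in> carrier G"
  shows "proj_H g \<in> H" "proj_K g \<in> K" "proj_H g \<otimes> proj_K g = g"
proof -
  obtain h k where "h \<in> H" "k \<in> K" "g = h \<otimes> k"
    using assms H_set_mult_K unfolding set_mult_def by blast
  then show "proj_H g \<in> H" "proj_K g \<in> K" "proj_H g \<otimes> proj_K g = g"
    using proj_HK_eq by simp_all
qed

lemma ball_carrier_iff_ball_HK:
  "(\<forall>g\<in>carrier G. P g) \<longleftrightarrow> (\<forall>h\<in>H. \<forall>k\<in>K. P (h \<otimes> k))"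
proof
  assume "\<forall>h\<in>H. \<forall>k\<in>K. P (h \<otimes> k)"
  then show "\<forall>g\<in>carrier G. P g"
    using proj_HK_decomposition by metis
qed simp

lemma bij_betw_HK_mult: "bij_betw (\<lambda>p. fst p \<otimes> snd p) (H \<times> K) (carrier G)"
proof (rule bij_betw_imageI)
  show "inj_on (\<lambda>p. fst p \<otimes> snd p) (H \<times> K)"
    using HK_decomposition_unique by (intro inj_onI) (auto simp: prod_eq_iff)
  have "g \<in> (\<lambda>p. fst p \<otimes> snd p) ` (H \<times> K)" if "g \<in> carrier G" for g
    using proj_HK_decomposition[OF that] by (intro rev_image_eqI[of "(proj_H g, proj_K g)"]) auto
  then show "(\<lambda>p. fst p \<otimes> snd p) ` (H \<times> K) = carrier G"
    by auto
qed

lemma bij_betw_carrier_iff_ex1_HK: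
  assumes "f \<in> carrier G \<rightarrow> carrier G"
  shows "bij_betw f (carrier G) (carrier G) \<longleftrightarrow>
    (\<forall>h'\<in>H. \<forall>k'\<in>K. \<exists>!p. p \<in> H \<times> K \<and> f (fst p \<otimes> snd p) = h' \<otimes> k')"
proof -
  have "bij_betw f (carrier G) (carrier G) \<longleftrightarrow>
      bij_betw (\<lambda>p. f (fst p \<otimes> snd p)) (H \<times> K) (carrier G)"
    using bij_betw_comp_iff[OF bij_betw_HK_mult] by (simp add: comp_def)
  also have "\<dots> \<longleftrightarrow> (\<forall>g\<in>carrier G. \<exists>!p. p \<in> H \<times> K \<and> f (fst p \<otimes> snd p) = g)"
    using assms by (intro bij_betw_iff_ex1) auto
  finally show ?thesis
    unfolding ball_carrier_iff_ball_HK .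
qed

definition alpha_of :: "('a \<Rightarrow> 'a) \<Rightarrow> 'a \<Rightarrow> 'a"
  where "alpha_of \<theta> = (\<lambda>h\<in>H. proj_H (\<theta> h))"

definition gamma_of :: "('a \<Rightarrow> 'a) \<Rightarrow> 'a \<Rightarrow> 'a"
  where "gamma_of \<theta> = (\<lambda>h\<in>H. proj_K (\<theta> h))"

definition matrix_of :: "('a \<Rightarrow> 'a) \<Rightarrow> 'a fmat"
  where "matrix_of \<theta> = (alpha_of \<theta>, gamma_of \<theta>, restrict \<theta> K)"

lemma alpha_gamma_of_eq:
  assumes "h \<in> H" "a \<in> H" "k \<in> K" "\<theta> h = a \<otimes> k"
  shows "alpha_of \<theta> h = a" "gamma_of \<theta> h = k"
  using assms proj_HK_eq by (simp_all add: alpha_of_def gamma_of_def)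

context
  fixes \<theta> assumes auto_\<theta>: "\<theta> \<in> auto G" and \<theta>_K: "\<theta> ` K = K"
begin

interpretation \<theta>: group_hom G G \<theta>
  using auto_\<theta> by (simp add: auto_def group_hom_def group_hom_axioms_def is_group)

lemma auto_K_closed: "k \<in> K \<Longrightarrow> \<theta> k \<in> K"
  using \<theta>_K by blast

lemma alpha_of_closed: "h \<in> H \<Longrightarrow> alpha_of \<theta> h \<in> H"
  and gamma_of_closed: "h \<in> H \<Longrightarrow> gamma_of \<theta> h \<in> K"
  and alpha_of_mult_gamma_of: "h \<in> H \<Longrightarrow> alpha_of \<theta> h \<otimes> gamma_of \<theta> h = \<theta> h"
  using proj_HK_decomposition[of "\<theta> h"] by (simp_all add: alpha_of_def gamma_of_def)

lemma auto_HK_eq: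
  assumes "h \<in> H" "k \<in> K"
  shows "\<theta> (h \<otimes> k) = alpha_of \<theta> h \<otimes> (gamma_of \<theta> h \<otimes> \<theta> k)"
  using assms alpha_of_closed gamma_of_closed
  by (simp add: alpha_of_mult_gamma_of[symmetric] m_assoc)

lemma auto_HK_iff:
  assumes "h \<in> H" "k \<in> K" "h' \<in> H" "k' \<in> K"
  shows "\<theta> (h \<otimes> k) = h' \<otimes> k' \<longleftrightarrow> alpha_of \<theta> h = h' \<and> gamma_of \<theta> h \<otimes> \<theta> k = k'"
  using HK_decomposition_unique[of "alpha_of \<theta> h" "gamma_of \<theta> h \<otimes> \<theta> k" h' k']
    assms auto_HK_eq alpha_of_closed gamma_of_closed auto_K_closed
  by auto

lemma alpha_gamma_of_mult:
  assumes "h \<in> H" "h' \<in> H"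
  shows "alpha_of \<theta> (h \<otimes> h') = alpha_of \<theta> h \<otimes> conjg G (alpha_of \<theta> h') (gamma_of \<theta> h)"
    and "gamma_of \<theta> (h \<otimes> h') = gamma_of \<theta> h \<otimes> gamma_of \<theta> h'"
proof -
  have "\<theta> (h \<otimes> h') = alpha_of \<theta> h \<otimes> gamma_of \<theta> h \<otimes> (alpha_of \<theta> h' \<otimes> gamma_of \<theta> h')"
    using assms by (simp add: alpha_of_mult_gamma_of)
  also have "\<dots> = alpha_of \<theta> h \<otimes> conjg G (alpha_of \<theta> h') (gamma_of \<theta> h)
      \<otimes> (gamma_of \<theta> h \<otimes> gamma_of \<theta> h')"
    using assms alpha_of_closed gamma_of_closed by (intro mult_commute_conjg) auto
  finally have eq: "\<theta> (h \<otimes> h') = \<dots>" .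
  show "alpha_of \<theta> (h \<otimes> h') = alpha_of \<theta> h \<otimes> conjg G (alpha_of \<theta> h') (gamma_of \<theta> h)"
      and "gamma_of \<theta> (h \<otimes> h') = gamma_of \<theta> h \<otimes> gamma_of \<theta> h'"
    using alpha_gamma_of_eq[where \<theta>=\<theta>, OF _ _ _ eq] assms alpha_of_closed gamma_of_closed
    by simp_all
qed

lemma alpha_gamma_of_conjg:
  assumes "h \<in> H" "k \<in> K"
  shows "alpha_of \<theta> (conjg G h k) = conjg G (alpha_of \<theta> h) (\<theta> k)"
    and "gamma_of \<theta> (conjg G h k) = conjg G (gamma_of \<theta> h) (\<theta> k)"
proof -
  have "\<theta> (conjg G h k) = conjg G (alpha_of \<theta> h \<otimes> gamma_of \<theta> h) (\<theta> k)"
    using assms by (simp add: conjg_def alpha_of_mult_gamma_of)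
  also have "\<dots> = conjg G (alpha_of \<theta> h) (\<theta> k) \<otimes> conjg G (gamma_of \<theta> h) (\<theta> k)"
    using assms alpha_of_closed gamma_of_closed by (simp add: conjg_mult_distrib)
  finally have eq: "\<theta> (conjg G h k) = \<dots>" .
  show "alpha_of \<theta> (conjg G h k) = conjg G (alpha_of \<theta> h) (\<theta> k)"
      and "gamma_of \<theta> (conjg G h k) = conjg G (gamma_of \<theta> h) (\<theta> k)"
    using alpha_gamma_of_eq[where \<theta>=\<theta>, OF _ _ _ eq] assms
      alpha_of_closed gamma_of_closed auto_K_closed
    by simp_all
qed

lemma matrix_of_ex1_condition:
  "\<forall>h'\<in>H. \<forall>k'\<in>K. \<exists>!p. p \<in> H \<times> K \<and> alpha_of \<theta> (fst p) = h' \<and>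
     gamma_of \<theta> (fst p) \<otimes> restrict \<theta> K (snd p) = k'"
proof -
  have "bij_betw \<theta> (carrier G) (carrier G)"
    using auto_\<theta> by (simp add: auto_def Bij_def)
  then have "\<forall>h'\<in>H. \<forall>k'\<in>K. \<exists>!p. p \<in> H \<times> K \<and> \<theta> (fst p \<otimes> snd p) = h' \<otimes> k'"
    by (simp add: bij_betw_carrier_iff_ex1_HK)
  moreover have "p \<in> H \<times> K \<and> \<theta> (fst p \<otimes> snd p) = h' \<otimes> k' \<longleftrightarrow>
      p \<in> H \<times> K \<and> alpha_of \<theta> (fst p) = h' \<and> gamma_of \<theta> (fst p) \<otimes> restrict \<theta> K (snd p) = k'"
    if "h' \<in> H" "k' \<in> K" for p h' k'
    using auto_HK_iff that by auto
  ultimately show ?thesis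
    by simp
qed

lemma restrict_auto_K: "restrict \<theta> K \<in> auto (G\<lparr>carrier := K\<rparr>)"
proof -
  have "inj_on \<theta> K"
    using auto_\<theta> subgroup.subset[OF subgroup_K]
    by (auto simp: auto_def Bij_def bij_betw_def intro: inj_on_subset)
  then show ?thesis
    using \<theta>_K auto_K_closed by (auto simp: auto_def hom_def Bij_def bij_betw_def)
qed

lemma matrix_of_in_MK: "matrix_of \<theta> \<in> MK G H K"
  unfolding MK_def matrix_of_def
  using alpha_of_closed gamma_of_closed alpha_gamma_of_mult alpha_gamma_of_conjg
    matrix_of_ex1_condition restrict_auto_K auto_K_closed
  by (auto simp: alpha_of_def gamma_of_def hom_def)

end

lemma matrix_of_compose:
  assumes "\<theta> \<in> auto G" "\<theta> ` K = K" "\<theta>' \<in> auto G" "\<theta>' ` K = K"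
  shows "matrix_of (compose (carrier G) \<theta> \<theta>') = MK_mult G H K (matrix_of \<theta>) (matrix_of \<theta>')"
proof -
  have "alpha_of (compose (carrier G) \<theta> \<theta>') h = alpha_of \<theta> (alpha_of \<theta>' h) \<and>
      gamma_of (compose (carrier G) \<theta> \<theta>') h = gamma_of \<theta> (alpha_of \<theta>' h) \<otimes> \<theta> (gamma_of \<theta>' h)"
    if h: "h \<in> H" for h
  proof -
    have "compose (carrier G) \<theta> \<theta>' h = \<theta> (alpha_of \<theta>' h \<otimes> gamma_of \<theta>' h)"
      using h alpha_of_mult_gamma_of[OF assms(3,4) h] by (simp add: compose_def)
    also have "\<dots> = alpha_of \<theta> (alpha_of \<theta>' h) \<otimes> (gamma_of \<theta> (alpha_of \<theta>' h) \<otimes> \<theta> (gamma_of \<theta>' h))"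
      using h assms by (simp add: auto_HK_eq alpha_of_closed gamma_of_closed)
    finally have eq: "compose (carrier G) \<theta> \<theta>' h = \<dots>" .
    show ?thesis
      using alpha_gamma_of_eq[where \<theta>="compose (carrier G) \<theta> \<theta>'", OF h _ _ eq]
        h assms alpha_of_closed gamma_of_closed auto_K_closed
      by simp
  qed
  then show ?thesis
    using assms gamma_of_closed alpha_of_closed auto_K_closed
    by (auto simp: matrix_of_def MK_mult_def fun_eq_iff compose_def alpha_of_def gamma_of_def)
qed

lemma matrix_of_inj: "inj_on matrix_of {\<theta> \<in> auto G. \<theta> ` K = K}"
proof (rule inj_onI)
  fix \<theta> \<theta>' assume "\<theta> \<in> {\<theta> \<in> auto G. \<theta> ` K = K}" "\<theta>' \<in> {\<theta> \<in> auto G. \<theta> ` K = K}"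
    and eq: "matrix_of \<theta> = matrix_of \<theta>'"
  then have \<theta>: "\<theta> \<in> auto G" "\<theta> ` K = K" and \<theta>': "\<theta>' \<in> auto G" "\<theta>' ` K = K"
    by simp_all
  have "\<theta> (h \<otimes> k) = \<theta>' (h \<otimes> k)" if "h \<in> H" "k \<in> K" for h k
  proof -
    have "restrict \<theta> K k = restrict \<theta>' K k"
      using eq by (simp add: matrix_of_def)
    then show ?thesis
      using that eq auto_HK_eq[OF \<theta>] auto_HK_eq[OF \<theta>'] by (simp add: matrix_of_def)
  qed
  then have "\<forall>x\<in>carrier G. \<theta> x = \<theta>' x"
    by (simp add: ball_carrier_iff_ball_HK)
  moreover have "\<theta> \<in> extensional (carrier G)" "\<theta>' \<in> extensional (carrier G)"
    using \<theta> \<theta>' by (simp_all add: auto_def Bij_def)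
  ultimately show "\<theta> = \<theta>'"
    by (simp add: extensionalityI)
qed

lemma matrix_of_id: "matrix_of (\<lambda>x\<in>carrier G. x) = MK_one G H K"
proof -
  have "alpha_of (\<lambda>x\<in>carrier G. x) h = h \<and> gamma_of (\<lambda>x\<in>carrier G. x) h = \<one>" if "h \<in> H" for h
    using alpha_gamma_of_eq[where \<theta>="\<lambda>x\<in>carrier G. x", of h h \<one>] that by simp
  then show ?thesis
    by (auto simp: matrix_of_def MK_one_def fun_eq_iff alpha_of_def gamma_of_def)
qed

end

locale semidirect_matrix = internal_semidirect_product +
  fixes \<alpha> \<gamma> \<delta> :: "'a \<Rightarrow> 'a"
  assumes in_MK: "(\<alpha>, \<gamma>, \<delta>) \<in> MK G H K"
begin

lemma alpha_closed: "h \<in> H \<Longrightarrow> \<alpha> h \<in> H"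
  and alpha_extensional: "\<alpha> \<in> extensional H"
  and gamma_closed: "h \<in> H \<Longrightarrow> \<gamma> h \<in> K"
  and gamma_mult: "h \<in> H \<Longrightarrow> h' \<in> H \<Longrightarrow> \<gamma> (h \<otimes> h') = \<gamma> h \<otimes> \<gamma> h'"
  and gamma_extensional: "\<gamma> \<in> extensional H"
  and delta_closed: "k \<in> K \<Longrightarrow> \<delta> k \<in> K"
  and delta_mult: "k \<in> K \<Longrightarrow> k' \<in> K \<Longrightarrow> \<delta> (k \<otimes> k') = \<delta> k \<otimes> \<delta> k'"
  and delta_extensional: "\<delta> \<in> extensional K"
  and delta_image: "\<delta> ` K = K"
  and alpha_mult: "h \<in> H \<Longrightarrow> h' \<in> H \<Longrightarrow> \<alpha> (h \<otimes> h') = \<alpha> h \<otimes> conjg G (\<alpha> h') (\<gamma> h)"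
  and gamma_conjg: "h \<in> H \<Longrightarrow> k \<in> K \<Longrightarrow> \<gamma> (conjg G h k) = conjg G (\<gamma> h) (\<delta> k)"
  and alpha_conjg: "h \<in> H \<Longrightarrow> k \<in> K \<Longrightarrow> \<alpha> (conjg G h k) = conjg G (\<alpha> h) (\<delta> k)"
  and ex1_condition: "\<forall>h'\<in>H. \<forall>k'\<in>K. \<exists>!p. p \<in> H \<times> K \<and> \<alpha> (fst p) = h' \<and> \<gamma> (fst p) \<otimes> \<delta> (snd p) = k'"
  using in_MK by (auto simp: MK_def auto_def hom_def Bij_def bij_betw_def PiE_def)

lemma gamma_one: "\<gamma> \<one> = \<one>"
  using gamma_mult[of \<one> \<one>] gamma_closed[of \<one>] by simp

lemma delta_one: "\<delta> \<one> = \<one>"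
  using delta_mult[of \<one> \<one>] delta_closed[of \<one>] by simp

lemma alpha_one: "\<alpha> \<one> = \<one>"
  using alpha_mult[of \<one> \<one>] alpha_closed[of \<one>] by (simp add: gamma_one)

definition aut_of_matrix :: "'a \<Rightarrow> 'a"
  where "aut_of_matrix = (\<lambda>g\<in>carrier G. \<alpha> (proj_H g) \<otimes> (\<gamma> (proj_H g) \<otimes> \<delta> (proj_K g)))"

lemma aut_of_matrix_HK_eq:
  "h \<in> H \<Longrightarrow> k \<in> K \<Longrightarrow> aut_of_matrix (h \<otimes> k) = \<alpha> h \<otimes> (\<gamma> h \<otimes> \<delta> k)"
  by (simp add: aut_of_matrix_def proj_HK_eq)

lemma aut_of_matrix_HK_iff:
  assumes "h \<in> H" "k \<in> K" "h' \<in> H" "k' \<in> K"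
  shows "aut_of_matrix (h \<otimes> k) = h' \<otimes> k' \<longleftrightarrow> \<alpha> h = h' \<and> \<gamma> h \<otimes> \<delta> k = k'"
  using HK_decomposition_unique[of "\<alpha> h" "\<gamma> h \<otimes> \<delta> k" h' k']
    assms aut_of_matrix_HK_eq alpha_closed gamma_closed delta_closed
  by auto

lemma aut_of_matrix_mult:
  assumes "x \<in> carrier G" "y \<in> carrier G"
  shows "aut_of_matrix (x \<otimes> y) = aut_of_matrix x \<otimes> aut_of_matrix y"
proof -
  have "aut_of_matrix (h \<otimes> k \<otimes> (h' \<otimes> k')) = aut_of_matrix (h \<otimes> k) \<otimes> aut_of_matrix (h' \<otimes> k')"
    if "h \<in> H" "k \<in> K" "h' \<in> H" "k' \<in> K" for h k h' k'
  proof -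
    have "aut_of_matrix (h \<otimes> k \<otimes> (h' \<otimes> k')) = aut_of_matrix (h \<otimes> conjg G h' k \<otimes> (k \<otimes> k'))"
      using that by (intro arg_cong[where f = aut_of_matrix] mult_commute_conjg) auto
    also have "\<dots> = \<alpha> h \<otimes> conjg G (conjg G (\<alpha> h') (\<delta> k)) (\<gamma> h)
        \<otimes> (\<gamma> h \<otimes> conjg G (\<gamma> h') (\<delta> k) \<otimes> (\<delta> k \<otimes> \<delta> k'))"
      using that
      by (simp add: aut_of_matrix_HK_eq alpha_mult gamma_mult alpha_conjg gamma_conjg delta_mult)
    also have "\<dots> = \<alpha> h \<otimes> (\<gamma> h \<otimes> \<delta> k) \<otimes> (\<alpha> h' \<otimes> (\<gamma> h' \<otimes> \<delta> k'))"
      using that alpha_closed gamma_closed delta_closed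
      by (simp add: conjg_def m_assoc inv_mult_cancel_left)
    finally show ?thesis
      using that by (simp add: aut_of_matrix_HK_eq)
  qed
  then have "\<forall>x\<in>carrier G. \<forall>y\<in>carrier G. aut_of_matrix (x \<otimes> y) = aut_of_matrix x \<otimes> aut_of_matrix y"
    by (simp add: ball_carrier_iff_ball_HK)
  then show ?thesis
    using assms by blast
qed

lemma aut_of_matrix_closed: "aut_of_matrix \<in> carrier G \<rightarrow> carrier G"
  using proj_HK_decomposition alpha_closed gamma_closed delta_closed
  by (simp add: aut_of_matrix_def)

lemma aut_of_matrix_in_auto: "aut_of_matrix \<in> auto G"
proof -
  have "\<forall>h'\<in>H. \<forall>k'\<in>K. \<exists>!p. p \<in> H \<times> K \<and> aut_of_matrix (fst p \<otimes> snd p) = h' \<otimes> k'"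
  proof -
    have "p \<in> H \<times> K \<and> aut_of_matrix (fst p \<otimes> snd p) = h' \<otimes> k' \<longleftrightarrow>
        p \<in> H \<times> K \<and> \<alpha> (fst p) = h' \<and> \<gamma> (fst p) \<otimes> \<delta> (snd p) = k'"
      if "h' \<in> H" "k' \<in> K" for p h' k'
      using aut_of_matrix_HK_iff that by auto
    then show ?thesis
      using ex1_condition by simp
  qed
  then have "bij_betw aut_of_matrix (carrier G) (carrier G)"
    using aut_of_matrix_closed by (simp add: bij_betw_carrier_iff_ex1_HK)
  then show ?thesis
    using aut_of_matrix_closed aut_of_matrix_mult
    by (simp add: auto_def hom_def Bij_def aut_of_matrix_def)
qed

lemma aut_of_matrix_K: "k \<in> K \<Longrightarrow> aut_of_matrix k = \<delta> k"
  using aut_of_matrix_HK_eq[of \<one> k] delta_closed by (simp add: alpha_one gamma_one)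

lemma aut_of_matrix_image_K: "aut_of_matrix ` K = K"
  using aut_of_matrix_K delta_image by simp

lemma matrix_of_aut_of_matrix: "matrix_of aut_of_matrix = (\<alpha>, \<gamma>, \<delta>)"
proof -
  have "alpha_of aut_of_matrix h = \<alpha> h \<and> gamma_of aut_of_matrix h = \<gamma> h" if "h \<in> H" for h
    using alpha_gamma_of_eq[where \<theta>=aut_of_matrix, of h "\<alpha> h" "\<gamma> h"]
      aut_of_matrix_HK_eq[of h \<one>] that alpha_closed gamma_closed
    by (simp add: delta_one)
  then show ?thesis
    using alpha_extensional gamma_extensional delta_extensional aut_of_matrix_K
    by (auto simp: matrix_of_def fun_eq_iff alpha_of_def gamma_of_def extensional_def)
qed

end

context internal_semidirect_product
begin

lemma carrier_AutK_group: "carrier (AutK_group G K) = {\<theta> \<in> auto G. \<theta> ` K = K}"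
  by (simp add: AutK_group_def)

lemma matrix_of_image: "matrix_of ` {\<theta> \<in> auto G. \<theta> ` K = K} = MK G H K"
proof
  show "matrix_of ` {\<theta> \<in> auto G. \<theta> ` K = K} \<subseteq> MK G H K"
    using matrix_of_in_MK by blast
next
  show "MK G H K \<subseteq> matrix_of ` {\<theta> \<in> auto G. \<theta> ` K = K}"
  proof
    fix M assume "M \<in> MK G H K"
    then obtain \<alpha> \<gamma> \<delta> where M: "M = (\<alpha>, \<gamma>, \<delta>)" "(\<alpha>, \<gamma>, \<delta>) \<in> MK G H K"
      by (cases M) auto
    interpret semidirect_matrix G H K \<alpha> \<gamma> \<delta>
      by unfold_locales (fact M(2))
    show "M \<in> matrix_of ` {\<theta> \<in> auto G. \<theta> ` K = K}"
      using M(1) matrix_of_aut_of_matrix aut_of_matrix_in_auto aut_of_matrix_image_K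
      by (metis (mono_tags, lifting) image_eqI mem_Collect_eq)
  qed
qed

lemma matrix_of_iso: "matrix_of \<in> iso (AutK_group G K) (MK_group G H K)"
proof -
  have "\<theta> \<otimes>\<^bsub>AutK_group G K\<^esub> \<theta>' = compose (carrier G) \<theta> \<theta>'"
    if "\<theta> \<in> auto G" "\<theta>' \<in> auto G" for \<theta> \<theta>'
    using that by (simp add: AutK_group_def AutoGroup_def BijGroup_def auto_def)
  then have "matrix_of \<in> hom (AutK_group G K) (MK_group G H K)"
    using matrix_of_in_MK matrix_of_compose
    by (auto simp: hom_def carrier_AutK_group MK_group_def)
  then show ?thesis
    using matrix_of_inj matrix_of_image
    by (simp add: iso_def bij_betw_def carrier_AutK_group MK_group_def)
qed

lemma group_MK_group: "group (MK_group G H K)"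
proof -
  have "matrix_of \<in> hom (AutK_group G K) (MK_group G H K)"
    and "matrix_of ` carrier (AutK_group G K) = carrier (MK_group G H K)"
    using matrix_of_iso by (simp_all add: iso_def bij_betw_def)
  moreover have "matrix_of \<one>\<^bsub>AutK_group G K\<^esub> = \<one>\<^bsub>MK_group G H K\<^esub>"
    using matrix_of_id by (simp add: AutK_group_def AutoGroup_def BijGroup_def MK_group_def)
  ultimately show ?thesis
    by (rule group.surj_hom_imp_group[OF AutK_group_is_group[OF is_group subgroup_K]])
qed

end

theorem mainTheorem1:
  fixes G :: "('a, 'b) monoid_scheme" and H K :: "'a set"
  assumes "group G"
    and "H \<lhd> G"
    and "subgroup K G"
    and "H \<inter> K = {\<one>\<^bsub>G\<^esub>}"
    and "H <#>\<^bsub>G\<^esub> K = carrier G"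
  shows "group (MK_group G H K) \<and>
         (\<exists>\<Phi>. \<Phi> \<in> iso (AutK_group G K) (MK_group G H K) \<and>
             (\<forall>\<theta> \<in> carrier (AutK_group G K). \<forall>\<alpha> \<gamma> \<delta>. \<Phi> \<theta> = (\<alpha>, \<gamma>, \<delta>) \<longrightarrow>
                 (\<forall>h\<in>H. \<theta> h = \<alpha> h \<otimes>\<^bsub>G\<^esub> \<gamma> h) \<and> \<delta> = restrict \<theta> K))"
proof -
  interpret internal_semidirect_product G H K
    using assms
    by (simp add: internal_semidirect_product_def internal_semidirect_product_axioms_def)
  have "\<forall>\<theta> \<in> carrier (AutK_group G K). \<forall>\<alpha> \<gamma> \<delta>. matrix_of \<theta> = (\<alpha>, \<gamma>, \<delta>) \<longrightarrow>
      (\<forall>h\<in>H. \<theta> h = \<alpha> h \<otimes>\<^bsub>G\<^esub> \<gamma> h) \<and> \<delta> = restrict \<theta> K"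
    using alpha_of_mult_gamma_of by (auto simp: matrix_of_def carrier_AutK_group)
  then show ?thesis
    using group_MK_group matrix_of_iso by blast
qed

end
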